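(* Let $K$ be a differential field of characteristic $0$ with algebraically closed field of constants $C_K$. Then $K^{PV_\infty}$ is algebraically closed and has no proper Picard–Vessiot extensions.
   Context: Let $K^{diff}$ be a differential closure of $K$ (so $C_{K^{diff}}=C_K$). A Picard–Vessiot (PV) extension of a differential field $F\subseteq K^{diff}$ with algebraically closed constants is a differential field extension of $F$ generated by the entries of some $Z\in GL_n$ with $\partial Z=AZ$, $A$ an $n\times n$ matrix over $F$, having no new constants (inside $K^{diff}$ when $F\subseteq K^{diff}$). $F^{PV}$ is the compositum in $K^{diff}$ of all PV extensions of $F$; $K^{PV_1}=K^{PV}$, $K^{PV_{n+1}}=(K^{PV_n})^{PV}$, and $K^{PV_\infty}=\bigcup_n K^{PV_n}$. *)

theory Defs
  imports "Jordan_Normal_Form.Determinant" "HOL-Library.Poly_Mapping"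
    "HOL-Computational_Algebra.Polynomial"
begin

text \<open>Ambient setting: the whole type 'a (a field of characteristic 0) with a
derivation D plays the role of K^diff; differential subfields are subsets.\<close>

definition derivation :: "('a::field \<Rightarrow> 'a) \<Rightarrow> bool" where
  "derivation D \<longleftrightarrow> (\<forall>x y. D (x + y) = D x + D y) \<and> (\<forall>x y. D (x * y) = x * D y + D x * y)"

definition subfield :: "'a::field set \<Rightarrow> bool" where
  "subfield F \<longleftrightarrow> 0 \<in> F \<and> 1 \<in> F \<and> (\<forall>x\<in>F. \<forall>y\<in>F. x + y \<in> F \<and> x * y \<in> F)
     \<and> (\<forall>x\<in>F. - x \<in> F \<and> inverse x \<in> F)"

definition diff_subfield :: "('a::field \<Rightarrow> 'a) \<Rightarrow> 'a set \<Rightarrow> bool" where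
  "diff_subfield D F \<longleftrightarrow> subfield F \<and> (\<forall>x\<in>F. D x \<in> F)"

definition constants :: "('a::field \<Rightarrow> 'a) \<Rightarrow> 'a set \<Rightarrow> 'a set" where
  "constants D F = {x \<in> F. D x = 0}"

definition alg_closed_set :: "'a::field set \<Rightarrow> bool" where
  "alg_closed_set F \<longleftrightarrow> (\<forall>p. degree p > 0 \<and> (\<forall>i. coeff p i \<in> F) \<longrightarrow> (\<exists>x\<in>F. poly p x = 0))"

text \<open>Differential polynomials in one differential indeterminate y over the
ambient field: finitely supported maps from monomials to coefficients, a
monomial m assigning to each derivative index i the exponent of y^(i).\<close>
type_synonym 'a dpoly = "(nat \<Rightarrow>\<^sub>0 nat) \<Rightarrow>\<^sub>0 'a"

definition dp_eval :: "('a::field \<Rightarrow> 'a) \<Rightarrow> 'a dpoly \<Rightarrow> 'a \<Rightarrow> 'a" where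
  "dp_eval D f a = (\<Sum>m\<in>Poly_Mapping.keys f. Poly_Mapping.lookup f m * (\<Prod>i\<in>Poly_Mapping.keys m. ((D ^^ i) a) ^ Poly_Mapping.lookup m i))"

definition dp_vars :: "'a::zero dpoly \<Rightarrow> nat set" where
  "dp_vars f = (\<Union>m\<in>Poly_Mapping.keys f. Poly_Mapping.keys m)"

text \<open>Blum's axioms for differentially closed fields of characteristic 0:
for differential polynomials f, g with g nonzero and ord g < ord f
(ord of a nonzero constant being -1), there is a with f(a) = 0 and g(a) \<noteq> 0.
(The case ord f = 0, g = 1 gives algebraic closedness.)\<close>
definition diff_closed :: "('a::field \<Rightarrow> 'a) \<Rightarrow> bool" where
  "diff_closed D \<longleftrightarrow> (\<forall>f g::'a dpoly. g \<noteq> 0 \<and> (\<exists>n\<in>dp_vars f. \<forall>j\<in>dp_vars g. j < n)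
      \<longrightarrow> (\<exists>a. dp_eval D f a = 0 \<and> dp_eval D g a \<noteq> 0))"

definition diff_gen :: "('a::field \<Rightarrow> 'a) \<Rightarrow> 'a set \<Rightarrow> 'a set \<Rightarrow> 'a set" where
  "diff_gen D F S = \<Inter>{E. diff_subfield D E \<and> F \<union> S \<subseteq> E}"

definition PV_ext :: "('a::field \<Rightarrow> 'a) \<Rightarrow> 'a set \<Rightarrow> 'a set \<Rightarrow> bool" where
  "PV_ext D F E \<longleftrightarrow> (\<exists>n (A::'a mat) (Z::'a mat).
      A \<in> carrier_mat n n \<and> Z \<in> carrier_mat n n \<and> det Z \<noteq> 0 \<and>
      (\<forall>i<n. \<forall>j<n. A $$ (i, j) \<in> F) \<and>
      map_mat D Z = A * Z \<and>
      E = diff_gen D F {Z $$ (i, j) | i j. i < n \<and> j < n} \<and>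
      constants D E = constants D F)"

definition PV_closure :: "('a::field \<Rightarrow> 'a) \<Rightarrow> 'a set \<Rightarrow> 'a set" where
  "PV_closure D F = diff_gen D F (\<Union>{E. PV_ext D F E})"

primrec PV_tower :: "('a::field \<Rightarrow> 'a) \<Rightarrow> 'a set \<Rightarrow> nat \<Rightarrow> 'a set" where
  "PV_tower D K 0 = K"
| "PV_tower D K (Suc n) = PV_closure D (PV_tower D K n)"

definition PV_infty :: "('a::field \<Rightarrow> 'a) \<Rightarrow> 'a set \<Rightarrow> 'a set" where
  "PV_infty D K = (\<Union>n. PV_tower D K n)"

end

theory Submission
  imports Defs
begin

text \<open>
  A differentially closed field is algebraically closed, and by assumption all its constants lie
  in K. Let p be a polynomial over a differential subfield F containing K; after passing to a
  factor gcd(p, p') over F we may assume that the roots r_1, ..., r_d of p are simple. Then p'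
  is invertible modulo p over F, so differentiating p(r) = 0 writes every D(r^i) as a polynomial
  of degree below d in r with coefficients in F. Thus the Vandermonde matrix Z = (r_k^i)
  satisfies Z' = A Z with A over F and det Z \<noteq> 0, so the roots of p lie in a
  Picard--Vessiot extension of F. As the coefficients of p, and the entries of the matrix of any
  Picard--Vessiot extension of K^{PV_\<infinity>}, already lie in a single K^{PV_n}, both claims
  follow.
\<close>

lemma subfieldD:
  assumes "subfield F"
  shows subfield_zero: "0 \<in> F" and subfield_one: "1 \<in> F"
    and subfield_add: "x \<in> F \<Longrightarrow> y \<in> F \<Longrightarrow> x + y \<in> F"
    and subfield_mult: "x \<in> F \<Longrightarrow> y \<in> F \<Longrightarrow> x * y \<in> F"
    and subfield_uminus: "x \<in> F \<Longrightarrow> - x \<in> F"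
    and subfield_inverse: "x \<in> F \<Longrightarrow> inverse x \<in> F"
  using assms unfolding subfield_def by auto

lemma subfield_diff: "subfield F \<Longrightarrow> x \<in> F \<Longrightarrow> y \<in> F \<Longrightarrow> x - y \<in> F"
  using subfield_add[of F x "- y"] subfield_uminus[of F y] by simp

lemma subfield_divide: "subfield F \<Longrightarrow> x \<in> F \<Longrightarrow> y \<in> F \<Longrightarrow> x / y \<in> F"
  using subfield_mult[of F x "inverse y"] subfield_inverse[of F y] by (simp add: divide_inverse)

lemma subfield_sum: "subfield F \<Longrightarrow> (\<And>i. i \<in> A \<Longrightarrow> f i \<in> F) \<Longrightarrow> sum f A \<in> F"
  by (induction A rule: infinite_finite_induct) (auto intro: subfield_zero subfield_add)

lemma subfield_of_nat: "subfield F \<Longrightarrow> of_nat n \<in> F"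
  by (induction n) (auto intro: subfield_zero subfield_one subfield_add)

definition poly_over :: "'a::field set \<Rightarrow> 'a poly \<Rightarrow> bool" where
  "poly_over F p \<longleftrightarrow> (\<forall>i. coeff p i \<in> F)"

lemma poly_over_0: "subfield F \<Longrightarrow> poly_over F 0"
  by (simp add: poly_over_def subfield_zero)

lemma poly_over_pCons: "poly_over F (pCons a p) \<longleftrightarrow> a \<in> F \<and> poly_over F p"
  unfolding poly_over_def by (auto simp: coeff_pCons split: nat.splits)

lemma poly_over_const: "subfield F \<Longrightarrow> a \<in> F \<Longrightarrow> poly_over F [:a:]"
  by (simp add: poly_over_pCons poly_over_0)

lemma poly_over_1: "subfield F \<Longrightarrow> poly_over F 1"
  using poly_over_const[of F 1] by (simp add: subfield_one pCons_one)

lemma poly_over_uminus: "subfield F \<Longrightarrow> poly_over F p \<Longrightarrow> poly_over F (- p)"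
  by (simp add: poly_over_def subfield_uminus)

lemma poly_over_diff: "subfield F \<Longrightarrow> poly_over F p \<Longrightarrow> poly_over F q \<Longrightarrow> poly_over F (p - q)"
  by (simp add: poly_over_def subfield_diff)

lemma poly_over_smult: "subfield F \<Longrightarrow> a \<in> F \<Longrightarrow> poly_over F p \<Longrightarrow> poly_over F (smult a p)"
  by (simp add: poly_over_def subfield_mult)

lemma poly_over_mult: "subfield F \<Longrightarrow> poly_over F p \<Longrightarrow> poly_over F q \<Longrightarrow> poly_over F (p * q)"
  unfolding poly_over_def coeff_mult by (auto intro!: subfield_sum subfield_mult)

lemma poly_over_monom: "subfield F \<Longrightarrow> a \<in> F \<Longrightarrow> poly_over F (monom a n)"
  by (simp add: poly_over_def coeff_monom subfield_zero)

lemma poly_over_pderiv: "subfield F \<Longrightarrow> poly_over F p \<Longrightarrow> poly_over F (pderiv p)"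
  unfolding poly_over_def coeff_pderiv
    by (auto intro!: subfield_mult subfield_of_nat subfield_add subfield_one)

lemma poly_over_map_poly:
  "diff_subfield D F \<Longrightarrow> D 0 = 0 \<Longrightarrow> poly_over F p \<Longrightarrow> poly_over F (map_poly D p)"
  unfolding poly_over_def diff_subfield_def by (simp add: coeff_map_poly)

lemma poly_over_division:
  fixes x y :: "'a::field poly"
  assumes F: "subfield F" and y: "poly_over F y" "y \<noteq> 0" and x: "poly_over F x"
  shows "\<exists>q r. poly_over F q \<and> poly_over F r \<and> x = q * y + r \<and> (r = 0 \<or> degree r < degree y)"
  using x
proof (induction x rule: pCons_induct)
  case 0
  then show ?case using F by (intro exI[of _ 0]) (auto simp: poly_over_0)
next
  case (pCons a x)
  then have a: "a \<in> F" and x: "poly_over F x" by (auto simp: poly_over_pCons)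
  from pCons.IH[OF x] obtain q r
    where qr: "poly_over F q" "poly_over F r" "x = q * y + r" "r = 0 \<or> degree r < degree y"
    by blast
  define b where "b = coeff (pCons a r) (degree y) / lead_coeff y"
  define r' where "r' = pCons a r - smult b y"
  have "poly_over F (pCons a r)" using a qr by (simp add: poly_over_pCons)
  then have b: "b \<in> F" unfolding b_def using y F
    by (intro subfield_divide) (auto simp: poly_over_def)
  have "degree (pCons a r) \<le> degree y"
    using qr(4) by (cases "r = 0") (auto simp: degree_pCons_eq_if)
  then have "degree r' \<le> degree y" unfolding r'_def by (intro degree_diff_le) auto
  moreover have "coeff r' (degree y) = 0" unfolding r'_def b_def using y by simp
  ultimately have "r' = 0 \<or> degree r' < degree y"
    by (metis leading_coeff_0_iff le_neq_implies_less)
  moreover have "pCons a x = pCons b q * y + r'"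
    unfolding r'_def qr(3) by (simp add: algebra_simps)
  moreover have "poly_over F r'"
    unfolding r'_def using F a b qr y
    by (intro poly_over_diff poly_over_smult) (auto simp: poly_over_pCons)
  ultimately show ?case using b qr
    by (intro exI[of _ "pCons b q"] exI[of _ r']) (auto simp: poly_over_pCons)
qed

lemma poly_over_bezout:
  fixes p q :: "'a::field poly"
  assumes F: "subfield F"
  shows "poly_over F p \<Longrightarrow> poly_over F q \<Longrightarrow> p \<noteq> 0 \<Longrightarrow> \<exists>s t g. poly_over F s \<and> poly_over F t
    \<and> poly_over F g \<and> s * p + t * q = g \<and> g dvd p \<and> g dvd q \<and> g \<noteq> 0"
proof (induction "if q = 0 then 0 else Suc (degree q)" arbitrary: p q rule: less_induct)
  case less
  show ?case
  proof (cases "q = 0")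
    case True
    then show ?thesis using less.prems F
      by (intro exI[of _ 1] exI[of _ 0] exI[of _ p]) (auto simp: poly_over_0 poly_over_1)
  next
    case False
    obtain d r where dr: "poly_over F d" "poly_over F r" "p = d * q + r"
      "r = 0 \<or> degree r < degree q"
      using poly_over_division[OF F less.prems(2) False less.prems(1)] by blast
    have "(if r = 0 then 0 else Suc (degree r)) < (if q = 0 then 0 else Suc (degree q))"
      using dr(4) False by auto
    then obtain s t g where stg: "poly_over F s" "poly_over F t" "poly_over F g"
      "s * q + t * r = g" "g dvd q" "g dvd r" "g \<noteq> 0"
      using less.hyps less.prems(2) dr(2) False by blast
    have "t * p + (s - t * d) * q = g"
      using stg(4) dr(3) by (simp add: algebra_simps)
    moreover have "g dvd p" using stg(5,6) dr(3) by simp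
    ultimately show ?thesis using stg dr F
      by (intro exI[of _ t] exI[of _ "s - t * d"] exI[of _ g])
        (auto intro: poly_over_diff poly_over_mult)
  qed
qed

lemma derivationD:
  assumes "derivation D"
  shows derivation_add: "D (x + y) = D x + D y"
    and derivation_mult: "D (x * y) = x * D y + D x * y"
  using assms unfolding derivation_def by auto

lemma derivation_zero: "derivation D \<Longrightarrow> D 0 = 0"
  using derivation_add[of D 0 0] by (metis add_0 add_cancel_right_right)

lemma derivation_one: "derivation D \<Longrightarrow> D 1 = 0"
  using derivation_mult[of D 1 1] by (metis mult_1 mult_1_right add_cancel_right_right)

lemma derivation_power: "derivation D \<Longrightarrow> D (x ^ n) = of_nat n * x ^ (n - 1) * D x"
proof (induction n)
  case (Suc n)
  then show ?case by (cases n) (auto simp: derivation_mult derivation_one algebra_simps)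
qed (simp add: derivation_one)

lemma derivation_poly:
  "derivation D \<Longrightarrow> D (poly p x) = poly (map_poly D p) x + poly (pderiv p) x * D x"
proof (induction p)
  case (pCons a p)
  then have "map_poly D (pCons a p) = pCons (D a) (map_poly D p)"
    by (simp add: map_poly_pCons derivation_zero)
  then show ?case using pCons
    by (simp add: derivation_add derivation_mult pderiv_pCons algebra_simps)
qed (simp add: derivation_zero)

lemma alg_closed_UNIV_has_root:
  fixes p :: "'a::field poly"
  shows "alg_closed_set (UNIV :: 'a set) \<Longrightarrow> degree p > 0 \<Longrightarrow> \<exists>x. poly p x = 0"
  unfolding alg_closed_set_def by auto

lemma card_roots_eq_degree:
  fixes p :: "'a::field poly"
  assumes AC: "alg_closed_set (UNIV :: 'a set)"
  shows "p \<noteq> 0 \<Longrightarrow> \<forall>x. poly p x = 0 \<longrightarrow> poly (pderiv p) x \<noteq> 0 \<Longrightarrow>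
    card {x. poly p x = 0} = degree p"
proof (induction "degree p" arbitrary: p)
  case 0
  then have "{x. poly p x = 0} = {}" by (auto elim: degree_eq_zeroE)
  then show ?case using 0 by simp
next
  case (Suc n)
  have "degree p > 0" using Suc.hyps(2) by simp
  then obtain r where r: "poly p r = 0" using alg_closed_UNIV_has_root[OF AC] by blast
  then have "[:-r, 1:] dvd p" by (simp add: dvd_iff_poly_eq_0)
  then obtain q where q: "p = [:-r, 1:] * q" by (elim dvdE)
  have q0: "q \<noteq> 0" using Suc.prems(1) q by auto
  have "degree p = degree [:-r, 1:] + degree q"
    unfolding q by (rule degree_mult_eq) (use q0 in auto)
  then have "degree q = n" using Suc.hyps(2) by simp
  have "pderiv p = [:-r, 1:] * pderiv q + q * pderiv [:-r, 1:]"
    unfolding q by (rule pderiv_mult)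
  moreover have "pderiv [:-r, 1:] = 1" by (simp add: pderiv_pCons)
  ultimately have pderiv_p: "pderiv p = q + [:-r, 1:] * pderiv q" by (simp add: add.commute)
  have "\<forall>x. poly q x = 0 \<longrightarrow> poly (pderiv q) x \<noteq> 0"
  proof (intro allI impI)
    fix x assume x: "poly q x = 0"
    then have "poly (pderiv p) x \<noteq> 0" using Suc.prems(2) q by simp
    then show "poly (pderiv q) x \<noteq> 0" unfolding pderiv_p using x by simp
  qed
  then have "card {x. poly q x = 0} = n"
    using Suc.hyps(1) \<open>degree q = n\<close> q0 by blast
  moreover have "poly q r \<noteq> 0"
  proof
    assume "poly q r = 0"
    then have "poly (pderiv p) r = 0" unfolding pderiv_p by simp
    then show False using Suc.prems(2) r by blast
  qed
  moreover have "{x. poly p x = 0} = insert r {x. poly q x = 0}" unfolding q by auto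
  ultimately show ?case using poly_roots_finite[OF q0] Suc.hyps(2) by simp
qed

lemma root_of_degree_one_poly_over:
  assumes F: "subfield F" and p: "poly_over F p" "degree p = 1" and x: "poly p x = 0"
  shows "x \<in> F"
proof -
  have "coeff p 0 + coeff p 1 * x = 0" using p(2) x by (simp add: poly_altdef)
  moreover have "p \<noteq> 0" using p(2) by auto
  then have "coeff p 1 \<noteq> 0" using p(2) by (metis leading_coeff_0_iff)
  ultimately have "x = - coeff p 0 / coeff p 1" by (simp add: field_simps add_eq_0_iff)
  then show ?thesis using F p(1)
    by (auto simp: poly_over_def intro!: subfield_divide subfield_uminus)
qed

lemma det_vandermonde_nonzero:
  fixes r :: "nat \<Rightarrow> 'a::field"
  assumes inj: "inj_on r {..<d}"
  shows "det (mat d d (\<lambda>(i, k). r k ^ i)) \<noteq> 0"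
proof
  define Z where "Z = mat d d (\<lambda>(i, k). r k ^ i)"
  assume "det (mat d d (\<lambda>(i, k). r k ^ i)) = 0"
  then have "det (transpose_mat Z) = 0" unfolding Z_def by (subst det_transpose) auto
  then obtain v where v: "v \<in> carrier_vec d" "v \<noteq> 0\<^sub>v d" "transpose_mat Z *\<^sub>v v = 0\<^sub>v d"
    using det_0_iff_vec_prod_zero_field[of "transpose_mat Z" d] unfolding Z_def by auto
  \<comment> \<open>A nonzero polynomial of degree below d vanishing at the d distinct points r k.\<close>
  define q where "q = (\<Sum>i<d. monom (v $ i) i)"
  have coeff_q: "coeff q n = (if n < d then v $ n else 0)" for n
    unfolding q_def coeff_sum coeff_monom by (auto simp: sum.delta)
  obtain j where j: "j < d" "v $ j \<noteq> 0" using v(1,2)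
    by (metis carrier_vecD eq_vecI index_zero_vec)
  have q0: "q \<noteq> 0" using coeff_q[of j] j by auto
  have "degree q \<le> d - 1" by (rule degree_le) (auto simp: coeff_q)
  then have deg_q: "degree q < d" using j by linarith
  have "poly q (r k) = 0" if k: "k < d" for k
  proof -
    have "poly q (r k) = (\<Sum>i<d. r k ^ i * v $ i)"
      unfolding q_def poly_sum poly_monom by (simp add: mult.commute)
    also have "\<dots> = (transpose_mat Z *\<^sub>v v) $ k"
      using k v(1) unfolding Z_def
      by (auto intro!: sum.cong simp: lessThan_atLeast0 scalar_prod_def)
    finally show ?thesis using v(3) k by simp
  qed
  then have "r ` {..<d} \<subseteq> {x. poly q x = 0}" by auto
  then have "card (r ` {..<d}) \<le> card {x. poly q x = 0}"
    by (intro card_mono poly_roots_finite q0)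
  also have "\<dots> \<le> degree q" by (rule card_poly_roots_bound[OF q0])
  finally show False using card_image[OF inj] deg_q by simp
qed

lemma poly_eq_sum_lessThan:
  fixes p :: "'a::comm_semiring_1 poly"
  assumes "degree p < d"
  shows "poly p x = (\<Sum>j<d. coeff p j * x ^ j)"
proof -
  have "poly p x = (\<Sum>j\<le>degree p. coeff p j * x ^ j)" by (rule poly_altdef)
  also have "\<dots> = (\<Sum>j<d. coeff p j * x ^ j)"
    by (rule sum.mono_neutral_left) (use assms in \<open>auto simp: coeff_eq_0\<close>)
  finally show ?thesis .
qed

lemma vandermonde_derivative_eq:
  fixes r :: "nat \<Rightarrow> 'a::field"
  assumes "\<And>i k. i < d \<Longrightarrow> k < d \<Longrightarrow> D (r k ^ i) = poly (R i) (r k)"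
    and "\<And>i. i < d \<Longrightarrow> degree (R i) < d"
  shows "map_mat D (mat d d (\<lambda>(i, k). r k ^ i))
    = mat d d (\<lambda>(i, j). coeff (R i) j) * mat d d (\<lambda>(i, k). r k ^ i)"
    (is "map_mat D ?Z = ?A * ?Z")
proof (rule eq_matI)
  fix i k assume "i < dim_row (?A * ?Z)" "k < dim_col (?A * ?Z)"
  then have ik: "i < d" "k < d" by auto
  have "(?A * ?Z) $$ (i, k) = (\<Sum>j<d. coeff (R i) j * r k ^ j)"
    using ik by (auto simp: scalar_prod_def lessThan_atLeast0 intro!: sum.cong)
  also have "\<dots> = poly (R i) (r k)" using poly_eq_sum_lessThan[OF assms(2)[OF ik(1)]] by simp
  also have "\<dots> = D (r k ^ i)" using assms(1) ik by simp
  finally show "map_mat D ?Z $$ (i, k) = (?A * ?Z) $$ (i, k)" using ik by simp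
qed auto

lemma diff_subfield_Inter:
  "(\<And>E. E \<in> S \<Longrightarrow> diff_subfield D E) \<Longrightarrow> diff_subfield D (\<Inter>S)"
  unfolding diff_subfield_def subfield_def by blast

lemma diff_subfield_diff_gen: "diff_subfield D (diff_gen D F S)"
  unfolding diff_gen_def by (rule diff_subfield_Inter) auto

lemma diff_gen_upper: "F \<union> S \<subseteq> diff_gen D F S"
  unfolding diff_gen_def by auto

lemma diff_gen_least: "diff_subfield D E \<Longrightarrow> F \<union> S \<subseteq> E \<Longrightarrow> diff_gen D F S \<subseteq> E"
  unfolding diff_gen_def by auto

lemma diff_gen_eq_self: "diff_subfield D F \<Longrightarrow> S \<subseteq> F \<Longrightarrow> diff_gen D F S = F"
  using diff_gen_least[of D F F S] diff_gen_upper[of F S D] by auto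

lemma subset_PV_closure: "F \<subseteq> PV_closure D F"
  unfolding PV_closure_def using diff_gen_upper by blast

lemma diff_subfield_PV_closure: "diff_subfield D (PV_closure D F)"
  unfolding PV_closure_def by (rule diff_subfield_diff_gen)

lemma fundamental_matrix_in_PV_closure:
  assumes F: "diff_subfield D F" and cst: "constants D UNIV \<subseteq> F"
    and A: "A \<in> carrier_mat n n" and Z: "Z \<in> carrier_mat n n" and det: "det Z \<noteq> 0"
    and AF: "\<forall>i<n. \<forall>j<n. A $$ (i, j) \<in> F" and eq: "map_mat D Z = A * Z"
    and ij: "i < n" "j < n"
  shows "Z $$ (i, j) \<in> PV_closure D F"
proof -
  define S where "S = {Z $$ (i, j) | i j. i < n \<and> j < n}"
  define E where "E = diff_gen D F S"
  have FE: "F \<subseteq> E" "S \<subseteq> E" unfolding E_def using diff_gen_upper[of F S D] by auto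
  \<comment> \<open>No new constants can appear, since all constants of the ambient field already lie in F.\<close>
  have "constants D E = constants D F"
    using FE(1) cst unfolding constants_def by auto
  then have "PV_ext D F E"
    unfolding PV_ext_def using A Z det AF eq by (auto simp: E_def S_def)
  then have "E \<subseteq> PV_closure D F"
    unfolding PV_closure_def using diff_gen_upper[of F "\<Union>{E. PV_ext D F E}" D] by blast
  moreover have "Z $$ (i, j) \<in> S" unfolding S_def using ij by blast
  ultimately show ?thesis using FE(2) by blast
qed

lemma vandermonde_in_PV_closure:
  fixes D :: "'a::field \<Rightarrow> 'a"
  assumes F: "diff_subfield D F" and cst: "constants D UNIV \<subseteq> F"
    and r: "inj_on r {..<d}"
    and R: "\<And>i. i < d \<Longrightarrow> poly_over F (R i)" "\<And>i. i < d \<Longrightarrow> degree (R i) < d"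
    and D_powers: "\<And>i k. i < d \<Longrightarrow> k < d \<Longrightarrow> D (r k ^ i) = poly (R i) (r k)"
    and ik: "i < d" "k < d"
  shows "r k ^ i \<in> PV_closure D F"
proof -
  define Z where "Z = mat d d (\<lambda>(i, k). r k ^ i)"
  define A where "A = mat d d (\<lambda>(i, j). coeff (R i) j)"
  have "map_mat D Z = A * Z"
    unfolding Z_def A_def by (rule vandermonde_derivative_eq) (use R D_powers in auto)
  moreover have "det Z \<noteq> 0" unfolding Z_def by (rule det_vandermonde_nonzero[OF r])
  moreover have "\<forall>i<d. \<forall>j<d. A $$ (i, j) \<in> F" using R(1) by (auto simp: A_def poly_over_def)
  ultimately have "Z $$ (i, k) \<in> PV_closure D F"
    using fundamental_matrix_in_PV_closure[OF F cst, of A d Z i k] ik by (simp add: A_def Z_def)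
  then show ?thesis using ik by (simp add: Z_def)
qed

lemma derivative_of_powers_at_simple_roots:
  assumes der: "derivation D" and F: "diff_subfield D F"
    and p: "poly_over F p" "degree p > 0" and t: "poly_over F t"
    and simple: "\<And>x. poly p x = 0 \<Longrightarrow> poly t x * poly (pderiv p) x = 1"
  obtains R where "\<And>i. poly_over F (R i)" "\<And>i. degree (R i) < degree p"
    "\<And>i x. poly p x = 0 \<Longrightarrow> D (x ^ i) = poly (R i) x"
proof -
  have sF: "subfield F" using F by (simp add: diff_subfield_def)
  have p0: "p \<noteq> 0" using p(2) by auto
  define q where "q = - (map_poly D p * t)"
  have q: "poly_over F q" unfolding q_def
    using sF p t poly_over_map_poly[OF F derivation_zero[OF der]]
    by (intro poly_over_uminus poly_over_mult) auto
  have D_root: "D x = poly q x" if x: "poly p x = 0" for x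
  proof -
    have "0 = poly (map_poly D p) x + poly (pderiv p) x * D x"
      using derivation_poly[OF der, of p x] x derivation_zero[OF der] by simp
    then have p'D: "poly (pderiv p) x * D x = - poly (map_poly D p) x"
      by (simp add: eq_neg_iff_add_eq_0 add.commute)
    have "D x = poly t x * poly (pderiv p) x * D x" using simple[OF x] by simp
    also have "\<dots> = poly q x" unfolding mult.assoc p'D q_def by simp
    finally show ?thesis .
  qed
  have "\<forall>i. \<exists>R. poly_over F R \<and> degree R < degree p \<and> (\<forall>x. poly p x = 0 \<longrightarrow> D (x ^ i) = poly R x)"
    (is "\<forall>i. \<exists>R. ?R i R")
  proof
    fix i
    have "poly_over F (monom (of_nat i) (i - 1) * q)"
      using sF q by (intro poly_over_mult poly_over_monom subfield_of_nat)
    then obtain Q R where QR: "poly_over F R" "monom (of_nat i) (i - 1) * q = Q * p + R"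
      "R = 0 \<or> degree R < degree p"
      using poly_over_division[OF sF p(1) p0] by blast
    have "D (x ^ i) = poly R x" if "poly p x = 0" for x
      using derivation_power[OF der, of x i] D_root[OF that] that
        arg_cong[OF QR(2), of "\<lambda>h. poly h x"]
      by (simp add: poly_monom)
    moreover have "degree R < degree p" using QR(3) p(2) by auto
    ultimately show "\<exists>R. ?R i R" using QR(1) by blast
  qed
  from choice[OF this] obtain R where "\<forall>i. ?R i (R i)" by blast
  then show ?thesis by (intro that) auto
qed

lemma simple_root_in_PV_closure:
  fixes D :: "'a::field \<Rightarrow> 'a"
  assumes der: "derivation D" and AC: "alg_closed_set (UNIV :: 'a set)"
    and F: "diff_subfield D F" and cst: "constants D UNIV \<subseteq> F"
    and p: "poly_over F p" and t: "poly_over F t"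
    and simple: "\<And>x. poly p x = 0 \<Longrightarrow> poly t x * poly (pderiv p) x = 1"
    and x: "poly p x = 0"
  shows "x \<in> PV_closure D F"
proof -
  have "p \<noteq> 0" using simple[of 0] by auto
  have deg_p: "degree p > 0"
  proof (rule ccontr)
    assume "\<not> degree p > 0"
    then obtain c where "p = [:c:]" by (auto elim: degree_eq_zeroE)
    then show False using x \<open>p \<noteq> 0\<close> by simp
  qed
  define d where "d = degree p"
  consider "d = 1" | "d \<ge> 2" using deg_p d_def by linarith
  then show ?thesis
  proof cases
    case 1
    have "subfield F" using F by (simp add: diff_subfield_def)
    moreover have "degree p = 1" using 1 d_def by simp
    ultimately have "x \<in> F" using root_of_degree_one_poly_over p x by blast
    then show ?thesis using subset_PV_closure by blast
  next
    case 2
    have "\<forall>x. poly p x = 0 \<longrightarrow> poly (pderiv p) x \<noteq> 0"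
      using simple by (metis mult_zero_right zero_neq_one)
    then have "card {x. poly p x = 0} = d"
      unfolding d_def by (rule card_roots_eq_degree[OF AC \<open>p \<noteq> 0\<close>])
    then obtain r where r: "bij_betw r {..<d} {x. poly p x = 0}"
      using ex_bij_betw_nat_finite[OF poly_roots_finite[OF \<open>p \<noteq> 0\<close>]]
      by (auto simp: atLeast0LessThan)
    then obtain k where k: "k < d" "x = r k" using x by (auto simp: bij_betw_def)
    have roots: "poly p (r k) = 0" if "k < d" for k
      using r that by (auto simp: bij_betw_def)
    obtain R where R: "\<And>i. poly_over F (R i)" "\<And>i. degree (R i) < d"
      "\<And>i x. poly p x = 0 \<Longrightarrow> D (x ^ i) = poly (R i) x"
      using derivative_of_powers_at_simple_roots[OF der F p deg_p t simple] d_def by metis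
    have "r k ^ 1 \<in> PV_closure D F"
      using r R roots k 2
      by (intro vandermonde_in_PV_closure[OF F cst, of r d R]) (auto simp: bij_betw_def)
    then show ?thesis using k by simp
  qed
qed

lemma poly_over_has_root_in_PV_closure:
  fixes D :: "'a::field_char_0 \<Rightarrow> 'a"
  assumes der: "derivation D" and AC: "alg_closed_set (UNIV :: 'a set)"
    and F: "diff_subfield D F" and cst: "constants D UNIV \<subseteq> F"
  shows "poly_over F p \<Longrightarrow> degree p > 0 \<Longrightarrow> \<exists>x\<in>PV_closure D F. poly p x = 0"
proof (induction "degree p" arbitrary: p rule: less_induct)
  case less
  have sF: "subfield F" using F by (simp add: diff_subfield_def)
  have p: "p \<noteq> 0" using less.prems(2) by auto
  have p': "poly_over F (pderiv p)" "pderiv p \<noteq> 0" "degree (pderiv p) < degree p"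
    using poly_over_pderiv[OF sF less.prems(1)] less.prems(2)
    by (auto simp: pderiv_eq_0_iff degree_pderiv)
  obtain s t g where stg: "poly_over F t" "poly_over F g" "s * p + t * pderiv p = g"
    "g dvd p" "g dvd pderiv p" "g \<noteq> 0"
    using poly_over_bezout[OF sF less.prems(1) p'(1) p] by blast
  show ?case
  proof (cases "degree g > 0")
    case True
    have "degree g < degree p" using dvd_imp_degree_le[OF stg(5) p'(2)] p'(3) by simp
    then obtain x where "x \<in> PV_closure D F" "poly g x = 0" using less.hyps stg(2) True by blast
    with stg(4) show ?thesis by (auto elim!: dvdE)
  next
    case False
    then obtain c where c: "g = [:c:]" by (metis degree_eq_zeroE not_gr0)
    then have "c \<noteq> 0" "c \<in> F" using stg(2,6) by (auto simp: poly_over_pCons)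
    \<comment> \<open>The gcd of p and p' is a unit, so c^-1 t inverts p' at every root of p.\<close>
    have simple: "poly (smult (inverse c) t) x * poly (pderiv p) x = 1" if "poly p x = 0" for x
      using arg_cong[OF stg(3), of "\<lambda>q. poly q x"] that c \<open>c \<noteq> 0\<close> by (simp add: field_simps)
    obtain x where "poly p x = 0" using alg_closed_UNIV_has_root[OF AC less.prems(2)] by blast
    moreover have "poly_over F (smult (inverse c) t)"
      using sF stg(1) \<open>c \<in> F\<close> by (intro poly_over_smult subfield_inverse)
    ultimately show ?thesis
      using simple_root_in_PV_closure[OF der AC F cst less.prems(1) _ simple] by blast
  qed
qed

definition dpoly_of_poly :: "'a::comm_monoid_add poly \<Rightarrow> 'a dpoly" where
  "dpoly_of_poly p = (\<Sum>k\<le>degree p. Poly_Mapping.single (Poly_Mapping.single 0 k) (coeff p k))"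

lemma lookup_dpoly_of_poly:
  "Poly_Mapping.lookup (dpoly_of_poly p) (Poly_Mapping.single 0 k) = coeff p k"
  by (cases "k \<le> degree p")
    (auto simp: dpoly_of_poly_def lookup_sum lookup_single when_def coeff_eq_0
      inj_eq[OF inj_single])

lemma keys_dpoly_of_poly:
  "Poly_Mapping.keys (dpoly_of_poly p) \<subseteq> Poly_Mapping.single 0 ` {..degree p}"
  unfolding dpoly_of_poly_def
  using keys_sum[of "\<lambda>k. Poly_Mapping.single (Poly_Mapping.single 0 k) (coeff p k)" "{..degree p}"]
  by (auto split: if_splits)

lemma dp_eval_eq_sum:
  assumes "finite M" "Poly_Mapping.keys f \<subseteq> M"
  shows "dp_eval D f a = (\<Sum>m\<in>M. Poly_Mapping.lookup f m *
    (\<Prod>i\<in>Poly_Mapping.keys m. ((D ^^ i) a) ^ Poly_Mapping.lookup m i))"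
  unfolding dp_eval_def by (rule sum.mono_neutral_left) (use assms in \<open>auto simp: in_keys_iff\<close>)

lemma dp_eval_dpoly_of_poly: "dp_eval D (dpoly_of_poly p) a = poly p a"
proof -
  have "dp_eval D (dpoly_of_poly p) a = (\<Sum>m\<in>Poly_Mapping.single 0 ` {..degree p}.
      Poly_Mapping.lookup (dpoly_of_poly p) m *
      (\<Prod>i\<in>Poly_Mapping.keys m. ((D ^^ i) a) ^ Poly_Mapping.lookup m i))"
    by (rule dp_eval_eq_sum) (simp_all add: keys_dpoly_of_poly)
  also have "\<dots> = (\<Sum>k\<le>degree p. coeff p k * a ^ k)"
    by (subst sum.reindex)
      (auto simp: lookup_dpoly_of_poly inj_on_def inj_eq[OF inj_single] intro!: sum.cong)
  also have "\<dots> = poly p a" by (simp add: poly_altdef)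
  finally show ?thesis .
qed

lemma zero_in_dp_vars_dpoly_of_poly: "degree p > 0 \<Longrightarrow> 0 \<in> dp_vars (dpoly_of_poly p)"
proof -
  assume "degree p > 0"
  then have "Poly_Mapping.lookup (dpoly_of_poly p) (Poly_Mapping.single 0 (degree p)) \<noteq> 0"
    by (auto simp: lookup_dpoly_of_poly)
  then have "Poly_Mapping.single 0 (degree p) \<in> Poly_Mapping.keys (dpoly_of_poly p)"
    by (simp add: in_keys_iff)
  then show ?thesis using \<open>degree p > 0\<close> unfolding dp_vars_def by force
qed

lemma dp_vars_one: "dp_vars (1 :: 'a::zero_neq_one dpoly) = {}"
  by (simp add: dp_vars_def)

lemma diff_closed_imp_alg_closed_UNIV:
  fixes D :: "'a::field \<Rightarrow> 'a"
  assumes "diff_closed D"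
  shows "alg_closed_set (UNIV :: 'a set)"
  unfolding alg_closed_set_def
proof (intro allI impI)
  fix p :: "'a poly" assume "0 < degree p \<and> (\<forall>i. coeff p i \<in> UNIV)"
  then have "(1 :: 'a dpoly) \<noteq> 0 \<and> (\<exists>n\<in>dp_vars (dpoly_of_poly p). \<forall>j\<in>dp_vars 1. j < n)"
    using zero_in_dp_vars_dpoly_of_poly by (auto simp: dp_vars_one)
  then obtain a where "dp_eval D (dpoly_of_poly p) a = 0"
    using assms unfolding diff_closed_def by blast
  then show "\<exists>x\<in>UNIV. poly p x = 0" by (auto simp: dp_eval_dpoly_of_poly)
qed

lemma finite_range_coeff: "finite (range (coeff p))"
proof (rule finite_subset)
  have "coeff p i \<in> insert 0 (coeff p ` {..degree p})" for i
    by (cases "i \<le> degree p") (auto simp: coeff_eq_0)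
  then show "range (coeff p) \<subseteq> insert 0 (coeff p ` {..degree p})" by blast
qed simp

lemma finite_subset_UN_mono:
  fixes A :: "nat \<Rightarrow> 'a set"
  assumes "mono A" and "finite S" "S \<subseteq> (\<Union>n. A n)"
  shows "\<exists>n. S \<subseteq> A n"
  using assms(2,3)
proof (induction S rule: finite_induct)
  case (insert x S)
  then obtain n m where "S \<subseteq> A n" "x \<in> A m" by auto
  then have "insert x S \<subseteq> A (max n m)"
    using monoD[OF assms(1), of n "max n m"] monoD[OF assms(1), of m "max n m"] by auto
  then show ?case by blast
qed simp

lemma diff_subfield_UN_mono:
  fixes A :: "nat \<Rightarrow> 'a::field set"
  assumes "mono A" and sub: "\<And>n. diff_subfield D (A n)"
  shows "diff_subfield D (\<Union>n. A n)"
  unfolding diff_subfield_def subfield_def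
proof (intro conjI ballI)
  show "0 \<in> (\<Union>n. A n)" "1 \<in> (\<Union>n. A n)"
    using sub[of 0] by (auto simp: diff_subfield_def subfield_def)
  fix x assume "x \<in> (\<Union>n. A n)"
  then obtain n where "x \<in> A n" by blast
  then show "- x \<in> (\<Union>n. A n)" "inverse x \<in> (\<Union>n. A n)" "D x \<in> (\<Union>n. A n)"
    using sub[of n] by (auto simp: diff_subfield_def subfield_def)
  fix y assume "y \<in> (\<Union>n. A n)"
  then obtain k where "{x, y} \<subseteq> A k"
    using finite_subset_UN_mono[OF assms(1), of "{x, y}"] \<open>x \<in> (\<Union>n. A n)\<close> by auto
  then show "x + y \<in> (\<Union>n. A n)" "x * y \<in> (\<Union>n. A n)"
    using sub[of k] by (auto simp: diff_subfield_def subfield_def)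
qed

lemma mono_PV_tower: "mono (PV_tower D K)"
  unfolding mono_iff_le_Suc by (simp add: subset_PV_closure)

lemma diff_subfield_PV_tower: "diff_subfield D K \<Longrightarrow> diff_subfield D (PV_tower D K n)"
  by (cases n) (simp_all add: diff_subfield_PV_closure)

lemma subset_PV_tower: "K \<subseteq> PV_tower D K n"
  using monoD[OF mono_PV_tower, of 0 n] by simp

lemma PV_tower_subset_PV_infty: "PV_tower D K n \<subseteq> PV_infty D K"
  unfolding PV_infty_def by blast

lemma finite_subset_PV_infty: "finite S \<Longrightarrow> S \<subseteq> PV_infty D K \<Longrightarrow> \<exists>n. S \<subseteq> PV_tower D K n"
  unfolding PV_infty_def by (rule finite_subset_UN_mono[OF mono_PV_tower])

lemma diff_subfield_PV_infty: "diff_subfield D K \<Longrightarrow> diff_subfield D (PV_infty D K)"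
  unfolding PV_infty_def by (intro diff_subfield_UN_mono mono_PV_tower diff_subfield_PV_tower)

lemma alg_closed_PV_infty:
  fixes D :: "'a::field_char_0 \<Rightarrow> 'a"
  assumes der: "derivation D" and AC: "alg_closed_set (UNIV :: 'a set)"
    and K: "diff_subfield D K" and cst: "constants D UNIV \<subseteq> K"
  shows "alg_closed_set (PV_infty D K)"
  unfolding alg_closed_set_def
proof (intro allI impI)
  fix p :: "'a poly" assume p: "0 < degree p \<and> (\<forall>i. coeff p i \<in> PV_infty D K)"
  then obtain n where "range (coeff p) \<subseteq> PV_tower D K n"
    using finite_subset_PV_infty[OF finite_range_coeff] by blast
  then have "poly_over (PV_tower D K n) p" by (auto simp: poly_over_def)
  moreover have "constants D UNIV \<subseteq> PV_tower D K n" using cst subset_PV_tower by blast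
  ultimately obtain x where "x \<in> PV_closure D (PV_tower D K n)" "poly p x = 0"
    using poly_over_has_root_in_PV_closure[OF der AC diff_subfield_PV_tower[OF K]] p by blast
  then show "\<exists>x\<in>PV_infty D K. poly p x = 0" using PV_tower_subset_PV_infty[of D K "Suc n"] by auto
qed

lemma PV_ext_of_PV_infty_eq:
  assumes K: "diff_subfield D K" and cst: "constants D UNIV \<subseteq> K"
    and "PV_ext D (PV_infty D K) E"
  shows "E = PV_infty D K"
proof -
  obtain n A Z where A: "A \<in> carrier_mat n n" and Z: "Z \<in> carrier_mat n n" and det: "det Z \<noteq> 0"
    and AF: "\<forall>i<n. \<forall>j<n. A $$ (i, j) \<in> PV_infty D K" and eq: "map_mat D Z = A * Z"
    and E: "E = diff_gen D (PV_infty D K) {Z $$ (i, j) | i j. i < n \<and> j < n}"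
    using assms(3) unfolding PV_ext_def by blast
  have "finite {A $$ (i, j) | i j. i < n \<and> j < n}" by (intro finite_image_set2) auto
  moreover have "{A $$ (i, j) | i j. i < n \<and> j < n} \<subseteq> PV_infty D K" using AF by blast
  ultimately obtain N where "{A $$ (i, j) | i j. i < n \<and> j < n} \<subseteq> PV_tower D K N"
    using finite_subset_PV_infty by blast
  then have AN: "\<forall>i<n. \<forall>j<n. A $$ (i, j) \<in> PV_tower D K N" by blast
  have "constants D UNIV \<subseteq> PV_tower D K N" using cst subset_PV_tower[of K D N] by blast
  then have "Z $$ (i, j) \<in> PV_tower D K (Suc N)" if "i < n" "j < n" for i j
    using fundamental_matrix_in_PV_closure[OF diff_subfield_PV_tower[OF K] _ A Z det AN eq that]
    by simp
  then have "{Z $$ (i, j) | i j. i < n \<and> j < n} \<subseteq> PV_infty D K"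
    using PV_tower_subset_PV_infty by blast
  then show ?thesis unfolding E by (rule diff_gen_eq_self[OF diff_subfield_PV_infty[OF K]])
qed

theorem lemma1p15:
  fixes D :: "'a::field_char_0 \<Rightarrow> 'a" and K :: "'a set"
  assumes "derivation D"
    and "diff_subfield D K"
    and "alg_closed_set (constants D K)"
    and "diff_closed D"
    and "constants D UNIV = constants D K"
  shows "alg_closed_set (PV_infty D K)
    \<and> (\<forall>E. PV_ext D (PV_infty D K) E \<longrightarrow> E = PV_infty D K)"
proof -
  have cst: "constants D UNIV \<subseteq> K" using assms(5) by (auto simp: constants_def)
  have AC: "alg_closed_set (UNIV :: 'a set)" by (rule diff_closed_imp_alg_closed_UNIV[OF assms(4)])
  show ?thesis
    using alg_closed_PV_infty[OF assms(1) AC assms(2) cst] PV_ext_of_PV_infty_eq[OF assms(2) cst]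
    by blast
qed

end
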